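(* Let $a_1,\ldots,a_k\in\mathbb R^d$ and $b_1,\ldots,b_k\in\mathbb R^d$ be two sets of orthonormal vectors such that $\langle a_i,b_i\rangle^2\ge 1-\epsilon$ for each $i\in[k]$. Then $\left\|\sum_{i=1}^k a_i^{\otimes 4}-b_i^{\otimes 4}\right\|_2\le 4\sqrt\epsilon$.
   Context: The 4-tensor $\sum_i a_i^{\otimes4}-b_i^{\otimes4}$ is viewed as the $d^2\times d^2$ matrix $\sum_i (a_i^{\otimes 2})(a_i^{\otimes2})^\top-(b_i^{\otimes2})(b_i^{\otimes2})^\top$, and $\|\cdot\|_2$ is its spectral norm. *)

theory Defs
  imports "HOL-Analysis.Analysis"
begin

definition tensor_sq :: "real^'d \<Rightarrow> real^('d \<times> 'd)" where
  "tensor_sq v = (\<chi> pq. v $ fst pq * v $ snd pq)"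

text \<open>The 4-tensor sum a_i^4 - b_i^4 viewed as the d^2 x d^2 matrix
  sum_i (a_i^2)(a_i^2)^T - (b_i^2)(b_i^2)^T.\<close>
definition quartic_diff_matrix ::
  "nat \<Rightarrow> (nat \<Rightarrow> real^'d) \<Rightarrow> (nat \<Rightarrow> real^'d) \<Rightarrow> real^('d \<times> 'd)^('d \<times> 'd)" where
  "quartic_diff_matrix k a b = (\<chi> r c. \<Sum>i<k.
      (tensor_sq (a i)) $ r * (tensor_sq (a i)) $ c
    - (tensor_sq (b i)) $ r * (tensor_sq (b i)) $ c)"

definition spectral_norm :: "real^'n^'m \<Rightarrow> real" where
  "spectral_norm M = onorm (\<lambda>x. M *v x)"

end

theory Submission
  imports Defs
begin

text \<open>The vectors a i \<otimes> a i and b i \<otimes> b i are again orthonormal, and the matrix acts as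
  P - Q, the difference of the orthogonal projections onto their spans.  For two orthonormal
  families A, B one has |P - Q| \<le> sqrt K as soon as \<Sum>i. ((A i - B i) \<bullet> y)^2 \<le> K |y|^2 for
  all y.  After flipping the sign of b i so that a i \<bullet> b i \<ge> 0 we get |a i - b i|^2 \<le> 2\<epsilon>, and
  a \<otimes> a - b \<otimes> b = (a - b) \<otimes> a + b \<otimes> (a - b) together with Bessel's inequality for the rows
  and the columns of y gives K = 8\<epsilon>.\<close>

definition orthonormal_upto :: "nat \<Rightarrow> (nat \<Rightarrow> 'a::real_inner) \<Rightarrow> bool" where
  "orthonormal_upto k E \<longleftrightarrow> (\<forall>i<k. \<forall>j<k. E i \<bullet> E j = (if i = j then 1 else 0))"

definition orth_proj :: "nat \<Rightarrow> (nat \<Rightarrow> 'a::real_inner) \<Rightarrow> 'a \<Rightarrow> 'a" where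
  "orth_proj k E z = (\<Sum>i<k. (E i \<bullet> z) *\<^sub>R E i)"

lemma inner_orthonormal_sum:
  assumes "orthonormal_upto k E" and "j < k"
  shows "E j \<bullet> (\<Sum>i<k. \<beta> i *\<^sub>R E i) = \<beta> j"
proof -
  have "E j \<bullet> (\<Sum>i<k. \<beta> i *\<^sub>R E i) = (\<Sum>i<k. \<beta> i * (if j = i then 1 else 0))"
    using assms by (simp add: inner_sum_right orthonormal_upto_def)
  also have "\<dots> = \<beta> j" using assms(2) by (simp add: if_distrib cong: if_cong)
  finally show ?thesis .
qed

lemma norm_orthonormal_sum_sq:
  assumes "orthonormal_upto k E"
  shows "(norm (\<Sum>i<k. \<beta> i *\<^sub>R E i))\<^sup>2 = (\<Sum>i<k. (\<beta> i)\<^sup>2)"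
proof -
  have "(norm (\<Sum>i<k. \<beta> i *\<^sub>R E i))\<^sup>2 = (\<Sum>j<k. \<beta> j * (E j \<bullet> (\<Sum>i<k. \<beta> i *\<^sub>R E i)))"
    by (simp add: power2_norm_eq_inner inner_sum_left)
  also have "\<dots> = (\<Sum>j<k. (\<beta> j)\<^sup>2)"
    by (rule sum.cong) (auto simp: inner_orthonormal_sum[OF assms] power2_eq_square)
  finally show ?thesis .
qed

lemma inner_orth_proj:
  assumes "orthonormal_upto k E" and "j < k"
  shows "E j \<bullet> orth_proj k E z = E j \<bullet> z"
  unfolding orth_proj_def by (rule inner_orthonormal_sum[OF assms])

lemma orthogonal_diff_orth_proj:
  assumes "orthonormal_upto k E" and "j < k"
  shows "(z - orth_proj k E z) \<bullet> E j = 0"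
  using inner_orth_proj[OF assms, of z] by (metis inner_commute inner_diff_right diff_self)

lemma orthogonal_orth_proj:
  assumes "\<And>j. j < k \<Longrightarrow> v \<bullet> E j = 0"
  shows "v \<bullet> orth_proj k E z = 0"
  by (simp add: orth_proj_def inner_sum_right assms)

lemma norm_orth_proj_sq:
  assumes "orthonormal_upto k E"
  shows "(norm (orth_proj k E z))\<^sup>2 = (\<Sum>i<k. (E i \<bullet> z)\<^sup>2)"
  unfolding orth_proj_def by (rule norm_orthonormal_sum_sq[OF assms])

lemma bessel_inequality:
  assumes "orthonormal_upto k E"
  shows "(\<Sum>i<k. (E i \<bullet> z)\<^sup>2) \<le> (norm z)\<^sup>2"
proof -
  let ?p = "orth_proj k E z"
  have zp: "z \<bullet> ?p = (\<Sum>i<k. (E i \<bullet> z)\<^sup>2)"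
    by (simp add: orth_proj_def inner_sum_right power2_eq_square inner_commute)
  have "0 \<le> (z - ?p) \<bullet> (z - ?p)" by simp
  also have "\<dots> = z \<bullet> z - 2 * (z \<bullet> ?p) + ?p \<bullet> ?p"
    by (simp add: inner_diff inner_commute)
  finally show ?thesis
    using zp norm_orth_proj_sq[OF assms, of z] by (simp add: power2_norm_eq_inner)
qed

lemma norm_orth_proj_diff_on_range:
  assumes oA: "orthonormal_upto k A" and oB: "orthonormal_upto k B"
    and K: "\<And>y. (\<Sum>i<k. ((A i - B i) \<bullet> y)\<^sup>2) \<le> K * (norm y)\<^sup>2" and "0 \<le> K"
  shows "(norm (orth_proj k A x - orth_proj k B (orth_proj k A x)))\<^sup>2
           \<le> K * (norm (orth_proj k A x))\<^sup>2"
proof -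
  define u where "u = orth_proj k A x"
  define v where "v = u - orth_proj k B u"
  have vB: "v \<bullet> B j = 0" if "j < k" for j
    unfolding v_def by (rule orthogonal_diff_orth_proj[OF oB that])
  have diff_v: "(A i - B i) \<bullet> v = v \<bullet> A i" if "i < k" for i
    using vB[OF that] by (simp add: inner_commute inner_diff_right)
  have "v \<bullet> v = v \<bullet> u"
    using orthogonal_orth_proj[of k v B u, OF vB] by (simp add: v_def inner_diff_right)
  also have "\<dots> = (\<Sum>i<k. (A i \<bullet> x) * ((A i - B i) \<bullet> v))"
    unfolding u_def orth_proj_def inner_sum_right by (intro sum.cong refl) (simp add: diff_v)
  finally have "(v \<bullet> v)\<^sup>2 \<le> (\<Sum>i<k. (A i \<bullet> x)\<^sup>2) * (\<Sum>i<k. ((A i - B i) \<bullet> v)\<^sup>2)"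
    by (simp only: Cauchy_Schwarz_ineq_sum)
  also have "\<dots> \<le> (norm u)\<^sup>2 * (K * (norm v)\<^sup>2)"
    unfolding u_def norm_orth_proj_sq[OF oA] by (rule mult_left_mono[OF K]) (simp add: sum_nonneg)
  finally have "((norm v)\<^sup>2)\<^sup>2 \<le> (norm u)\<^sup>2 * (K * (norm v)\<^sup>2)"
    by (simp add: power2_norm_eq_inner)
  then show ?thesis
    using \<open>0 \<le> K\<close> unfolding u_def[symmetric] v_def[symmetric]
    by (cases "norm v = 0") (auto simp: power2_eq_square mult_ac)
qed

lemma norm_orth_proj_on_complement:
  assumes oA: "orthonormal_upto k A" and oB: "orthonormal_upto k B"
    and K: "\<And>y. (\<Sum>i<k. ((A i - B i) \<bullet> y)\<^sup>2) \<le> K * (norm y)\<^sup>2"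
  shows "(norm (orth_proj k B (x - orth_proj k A x)))\<^sup>2 \<le> K * (norm (x - orth_proj k A x))\<^sup>2"
proof -
  let ?w = "x - orth_proj k A x"
  have "(norm (orth_proj k B ?w))\<^sup>2 = (\<Sum>i<k. (B i \<bullet> ?w)\<^sup>2)"
    by (rule norm_orth_proj_sq[OF oB])
  also have "\<dots> = (\<Sum>i<k. ((A i - B i) \<bullet> ?w)\<^sup>2)"
    by (rule sum.cong) (auto simp: inner_diff_left inner_diff_right inner_orth_proj[OF oA] power2_commute)
  also have "\<dots> \<le> K * (norm ?w)\<^sup>2" by (rule K)
  finally show ?thesis .
qed

text \<open>Split x = u + w with u = P x and w orthogonal to the A i.  Then
  P x - Q x = (u - Q u) - Q w, where the two terms are orthogonal (the first is orthogonal
  to every B i) and each is bounded by the previous two lemmas.\<close>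

lemma norm_orth_proj_diff_le:
  assumes oA: "orthonormal_upto k A" and oB: "orthonormal_upto k B"
    and K: "\<And>y. (\<Sum>i<k. ((A i - B i) \<bullet> y)\<^sup>2) \<le> K * (norm y)\<^sup>2" and "0 \<le> K"
  shows "norm (orth_proj k A x - orth_proj k B x) \<le> sqrt K * norm x"
proof -
  define u where "u = orth_proj k A x"
  define w where "w = x - u"
  define v where "v = u - orth_proj k B u"
  have vB: "v \<bullet> B j = 0" if "j < k" for j
    unfolding v_def by (rule orthogonal_diff_orth_proj[OF oB that])
  have split: "orth_proj k A x - orth_proj k B x = v - orth_proj k B w"
    by (simp add: v_def w_def u_def orth_proj_def inner_diff_right scaleR_diff_left sum_subtractf)
  have pythagoras: "(norm u)\<^sup>2 + (norm w)\<^sup>2 = (norm x)\<^sup>2"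
  proof -
    have "w \<bullet> u = 0"
      unfolding u_def w_def by (intro orthogonal_orth_proj orthogonal_diff_orth_proj[OF oA])
    moreover have "x = u + w" by (simp add: w_def)
    ultimately show ?thesis
      by (simp add: power2_norm_eq_inner inner_add inner_commute)
  qed
  have "(norm (orth_proj k A x - orth_proj k B x))\<^sup>2 = (norm v)\<^sup>2 + (norm (orth_proj k B w))\<^sup>2"
    unfolding split using orthogonal_orth_proj[of k v B w, OF vB]
    by (simp add: power2_norm_eq_inner inner_diff inner_commute)
  also have "\<dots> \<le> K * ((norm u)\<^sup>2 + (norm w)\<^sup>2)"
    using norm_orth_proj_diff_on_range[OF oA oB K \<open>0 \<le> K\<close>, of x]
      norm_orth_proj_on_complement[OF oA oB K, of x]
    by (simp add: u_def v_def w_def distrib_left)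
  also have "\<dots> = (sqrt K * norm x)\<^sup>2"
    using \<open>0 \<le> K\<close> by (simp add: pythagoras power_mult_distrib)
  finally have "(norm (orth_proj k A x - orth_proj k B x))\<^sup>2 \<le> (sqrt K * norm x)\<^sup>2" .
  then show ?thesis by (rule power2_le_imp_le) (simp add: \<open>0 \<le> K\<close>)
qed

lemma sum_UNIV_prod: "(\<Sum>pq\<in>UNIV. f pq) = (\<Sum>p\<in>UNIV. \<Sum>q\<in>UNIV. f (p, q))"
  by (simp add: sum.cartesian_product)

lemma inner_tensor_sq: "tensor_sq a \<bullet> tensor_sq b = (a \<bullet> b)\<^sup>2"
  by (simp add: tensor_sq_def inner_vec_def sum_UNIV_prod power2_eq_square sum_product mult_ac)

lemma orthonormal_upto_tensor_sq:
  "orthonormal_upto k a \<Longrightarrow> orthonormal_upto k (\<lambda>i. tensor_sq (a i))"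
  by (simp add: orthonormal_upto_def inner_tensor_sq)

lemma tensor_sq_uminus [simp]: "tensor_sq (- v) = tensor_sq v"
  by (simp add: tensor_sq_def)

lemma quartic_diff_matrix_mult_vec:
  "quartic_diff_matrix k a b *v x =
     orth_proj k (\<lambda>i. tensor_sq (a i)) x - orth_proj k (\<lambda>i. tensor_sq (b i)) x"
unfolding vec_eq_iff proof
  fix r
  let ?A = "\<lambda>i. tensor_sq (a i)" and ?B = "\<lambda>i. tensor_sq (b i)"
  have "(quartic_diff_matrix k a b *v x) $ r =
      (\<Sum>i<k. \<Sum>c\<in>UNIV. (?A i $ r * ?A i $ c - ?B i $ r * ?B i $ c) * x $ c)"
    unfolding quartic_diff_matrix_def matrix_vector_mult_def
    by (simp add: sum_distrib_right sum.swap[of _ UNIV])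
  also have "\<dots> = (\<Sum>i<k. (?A i \<bullet> x) * ?A i $ r - (?B i \<bullet> x) * ?B i $ r)"
    unfolding inner_vec_def inner_real_def left_diff_distrib sum_subtractf sum_distrib_right
    by (simp add: mult_ac)
  also have "\<dots> = (orth_proj k ?A x - orth_proj k ?B x) $ r"
    by (simp add: orth_proj_def sum_subtractf)
  finally show "(quartic_diff_matrix k a b *v x) $ r = \<dots>" .
qed

definition contract :: "real^('d::finite \<times> 'd) \<Rightarrow> real^'d \<Rightarrow> real^'d" where
  "contract y v = (\<chi> p. \<Sum>q\<in>UNIV. y $ (p, q) * v $ q)"

definition tensor_transpose :: "real^('d::finite \<times> 'd) \<Rightarrow> real^('d \<times> 'd)" where
  "tensor_transpose y = (\<chi> pq. y $ (snd pq, fst pq))"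

lemma norm_tensor_transpose [simp]: "norm (tensor_transpose y) = norm y"
proof -
  have "(\<Sum>p\<in>UNIV. \<Sum>q\<in>UNIV. y $ (q, p) * y $ (q, p)) = (\<Sum>q\<in>UNIV. \<Sum>p\<in>UNIV. y $ (q, p) * y $ (q, p))"
    by (rule sum.swap)
  then show ?thesis
    by (simp add: norm_eq_sqrt_inner tensor_transpose_def inner_vec_def sum_UNIV_prod)
qed

lemma inner_tensor_sq_diff:
  "(tensor_sq a - tensor_sq c) \<bullet> y
     = (a - c) \<bullet> contract y a + (a - c) \<bullet> contract (tensor_transpose y) c"
proof -
  have "(tensor_sq a - tensor_sq c) \<bullet> y
      = (\<Sum>p\<in>UNIV. \<Sum>q\<in>UNIV. (a$p - c$p) * (y$(p,q) * a$q) + (a$q - c$q) * (y$(p,q) * c$p))"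
    by (simp add: tensor_sq_def inner_vec_def sum_UNIV_prod algebra_simps)
  also have "\<dots> = (\<Sum>p\<in>UNIV. \<Sum>q\<in>UNIV. (a$p - c$p) * (y$(p,q) * a$q))
      + (\<Sum>p\<in>UNIV. \<Sum>q\<in>UNIV. (a$q - c$q) * (y$(p,q) * c$p))"
    by (simp only: sum.distrib)
  also have "(\<Sum>p\<in>UNIV. \<Sum>q\<in>UNIV. (a$q - c$q) * (y$(p,q) * c$p))
      = (\<Sum>q\<in>UNIV. \<Sum>p\<in>UNIV. (a$q - c$q) * (y$(p,q) * c$p))"
    by (rule sum.swap)
  also have "(\<Sum>p\<in>UNIV. \<Sum>q\<in>UNIV. (a$p - c$p) * (y$(p,q) * a$q)) = (a - c) \<bullet> contract y a"
    by (simp add: contract_def inner_vec_def sum_distrib_left)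
  also have "(\<Sum>q\<in>UNIV. \<Sum>p\<in>UNIV. (a$q - c$q) * (y$(p,q) * c$p))
      = (a - c) \<bullet> contract (tensor_transpose y) c"
    by (simp add: contract_def tensor_transpose_def inner_vec_def sum_distrib_left)
  finally show ?thesis .
qed

lemma sum_norm_contract_sq_le:
  assumes "orthonormal_upto k e"
  shows "(\<Sum>i<k. (norm (contract y (e i)))\<^sup>2) \<le> (norm y)\<^sup>2"
proof -
  define row where "row p = (\<chi> q. y $ (p, q))" for p
  have norm_contract: "(norm (contract y v))\<^sup>2 = (\<Sum>p\<in>UNIV. (v \<bullet> row p)\<^sup>2)" for v
    unfolding power2_norm_eq_inner
    by (simp add: contract_def row_def inner_vec_def power2_eq_square mult.commute)
  have "(\<Sum>i<k. (norm (contract y (e i)))\<^sup>2) = (\<Sum>p\<in>UNIV. \<Sum>i<k. (e i \<bullet> row p)\<^sup>2)"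
    by (simp add: norm_contract sum.swap[of _ "{..<k}"])
  also have "\<dots> \<le> (\<Sum>p\<in>UNIV. (norm (row p))\<^sup>2)"
    by (rule sum_mono) (rule bessel_inequality[OF assms])
  also have "\<dots> = (norm y)\<^sup>2"
    by (simp add: power2_norm_eq_inner row_def inner_vec_def sum_UNIV_prod)
  finally show ?thesis .
qed

text \<open>Replacing b by -b if necessary makes the inner product nonnegative without changing
  tensor_sq b; then |a - b|^2 = 2 - 2 |a \<bullet> b| \<le> 2 - 2 (a \<bullet> b)^2.\<close>

lemma norm_diff_sign_aligned_sq_le:
  fixes a b :: "'a::real_inner"
  assumes "norm a = 1" and "norm b = 1" and "1 - \<epsilon> \<le> (a \<bullet> b)\<^sup>2"
  shows "(norm (a - (if 0 \<le> a \<bullet> b then b else - b)))\<^sup>2 \<le> 2 * \<epsilon>"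
proof -
  let ?t = "a \<bullet> b" and ?c = "if 0 \<le> a \<bullet> b then b else - b"
  have "(norm (a - ?c))\<^sup>2 = (norm a)\<^sup>2 - 2 * (a \<bullet> ?c) + (norm ?c)\<^sup>2"
    by (simp add: power2_norm_eq_inner inner_diff inner_commute)
  also have "\<dots> = 2 - 2 * \<bar>?t\<bar>"
    using assms(1,2) by auto
  finally have dist: "(norm (a - ?c))\<^sup>2 = 2 - 2 * \<bar>?t\<bar>" .
  have "\<bar>?t\<bar> \<le> 1"
    using Cauchy_Schwarz_ineq2[of a b] assms(1,2) by simp
  then have "\<bar>?t\<bar> * \<bar>?t\<bar> \<le> \<bar>?t\<bar>"
    by (rule mult_left_le) simp
  then have "?t\<^sup>2 \<le> \<bar>?t\<bar>"
    by (simp add: power2_eq_square)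
  with dist assms(3) show ?thesis by linarith
qed

lemma inner_tensor_sq_diff_sq_le:
  assumes "(norm (a - c))\<^sup>2 \<le> \<delta>"
  shows "((tensor_sq a - tensor_sq c) \<bullet> y)\<^sup>2
           \<le> 2 * \<delta> * ((norm (contract y a))\<^sup>2 + (norm (contract (tensor_transpose y) c))\<^sup>2)"
proof -
  let ?d = "a - c" and ?R = "contract y a" and ?C = "contract (tensor_transpose y) c"
  have "((tensor_sq a - tensor_sq c) \<bullet> y)\<^sup>2 = (?d \<bullet> ?R + ?d \<bullet> ?C)\<^sup>2"
    by (simp add: inner_tensor_sq_diff)
  also have "\<dots> \<le> 2 * (?d \<bullet> ?R)\<^sup>2 + 2 * (?d \<bullet> ?C)\<^sup>2"
    using sum_squares_bound[of "?d \<bullet> ?R" "?d \<bullet> ?C"] unfolding power2_sum by linarith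
  also have "\<dots> \<le> 2 * ((norm ?d)\<^sup>2 * (norm ?R)\<^sup>2) + 2 * ((norm ?d)\<^sup>2 * (norm ?C)\<^sup>2)"
    using Cauchy_Schwarz_ineq[of ?d ?R] Cauchy_Schwarz_ineq[of ?d ?C]
    by (simp add: power2_norm_eq_inner)
  also have "\<dots> \<le> 2 * (\<delta> * (norm ?R)\<^sup>2) + 2 * (\<delta> * (norm ?C)\<^sup>2)"
    using mult_right_mono[OF assms, of "(norm ?R)\<^sup>2"] mult_right_mono[OF assms, of "(norm ?C)\<^sup>2"]
    by simp
  finally show ?thesis by (simp add: algebra_simps)
qed

lemma sum_inner_tensor_sq_diff_sq_le:
  fixes a b :: "nat \<Rightarrow> real^'d"
  assumes "0 \<le> \<epsilon>" and oa: "orthonormal_upto k a" and ob: "orthonormal_upto k b"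
    and close: "\<forall>i<k. 1 - \<epsilon> \<le> (a i \<bullet> b i)\<^sup>2"
  shows "(\<Sum>i<k. ((tensor_sq (a i) - tensor_sq (b i)) \<bullet> y)\<^sup>2) \<le> 8 * \<epsilon> * (norm y)\<^sup>2"
proof -
  define c where "c i = (if 0 \<le> a i \<bullet> b i then b i else - b i)" for i
  have tensor_sq_c: "tensor_sq (c i) = tensor_sq (b i)" for i
    by (simp add: c_def)
  have oc: "orthonormal_upto k c"
    using ob by (auto simp: orthonormal_upto_def c_def)
  have unit: "norm (a i) = 1" "norm (b i) = 1" if "i < k" for i
    using oa ob that by (auto simp: orthonormal_upto_def norm_eq_1)
  have "(\<Sum>i<k. ((tensor_sq (a i) - tensor_sq (b i)) \<bullet> y)\<^sup>2)
      \<le> (\<Sum>i<k. 4 * \<epsilon> * ((norm (contract y (a i)))\<^sup>2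
                           + (norm (contract (tensor_transpose y) (c i)))\<^sup>2))"
  proof (rule sum_mono)
    fix i assume "i \<in> {..<k}"
    then have "(norm (a i - c i))\<^sup>2 \<le> 2 * \<epsilon>"
      unfolding c_def using close unit by (intro norm_diff_sign_aligned_sq_le) auto
    from inner_tensor_sq_diff_sq_le[OF this, of y]
    show "((tensor_sq (a i) - tensor_sq (b i)) \<bullet> y)\<^sup>2
      \<le> 4 * \<epsilon> * ((norm (contract y (a i)))\<^sup>2 + (norm (contract (tensor_transpose y) (c i)))\<^sup>2)"
      by (simp add: tensor_sq_c)
  qed
  also have "\<dots> = 4 * \<epsilon> * ((\<Sum>i<k. (norm (contract y (a i)))\<^sup>2)
                           + (\<Sum>i<k. (norm (contract (tensor_transpose y) (c i)))\<^sup>2))"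
    by (simp only: sum.distrib[symmetric] sum_distrib_left)
  also have "\<dots> \<le> 4 * \<epsilon> * ((norm y)\<^sup>2 + (norm (tensor_transpose y))\<^sup>2)"
    using sum_norm_contract_sq_le[OF oa, of y] sum_norm_contract_sq_le[OF oc, of "tensor_transpose y"]
    by (intro mult_left_mono add_mono) (simp_all add: \<open>0 \<le> \<epsilon>\<close>)
  finally show ?thesis by simp
qed

theorem mainTheorem10:
  fixes a b :: "nat \<Rightarrow> real^'d" and k :: nat and \<epsilon> :: real
  assumes "0 \<le> \<epsilon>"
    and "\<forall>i<k. \<forall>j<k. a i \<bullet> a j = (if i = j then 1 else 0)"
    and "\<forall>i<k. \<forall>j<k. b i \<bullet> b j = (if i = j then 1 else 0)"
    and "\<forall>i<k. (a i \<bullet> b i)\<^sup>2 \<ge> 1 - \<epsilon>"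
  shows "spectral_norm (quartic_diff_matrix k a b) \<le> 4 * sqrt \<epsilon>"
proof -
  have oa: "orthonormal_upto k a" and ob: "orthonormal_upto k b"
    using assms(2,3) by (simp_all add: orthonormal_upto_def)
  have "spectral_norm (quartic_diff_matrix k a b) \<le> sqrt (8 * \<epsilon>)"
    unfolding spectral_norm_def quartic_diff_matrix_mult_vec
    using assms(1,4)
    by (intro onorm_le norm_orth_proj_diff_le orthonormal_upto_tensor_sq oa ob
        sum_inner_tensor_sq_diff_sq_le) auto
  also have "\<dots> \<le> 4 * sqrt \<epsilon>"
  proof -
    have "sqrt 8 \<le> 4" by (rule real_le_lsqrt) auto
    then show ?thesis using \<open>0 \<le> \<epsilon>\<close> by (simp add: real_sqrt_mult mult_right_mono)
  qed
  finally show ?thesis .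
qed

end
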